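(* Let $n,m\ge 1$, let $A_1,\ldots,A_m$ be real symmetric $n\times n$ matrices and $a_1,\ldots,a_m\in\mathbb{R}^n$, and define $f:\mathbb{R}^n\to\mathbb{R}^m$ by $f(x)=(f_1(x),\ldots,f_m(x))$ with $f_i(x)=\frac12 x^TA_ix+a_i^Tx$. Let $A=[a_1~\ldots~a_m]\in\mathbb{R}^{n\times m}$, let $$L_{\rm new}:=\sqrt{\lambda_{\max}\Big(\sum_{i=1}^mA_i^TA_i\Big)},\qquad \nu:=\sigma_{\min}(A)=\sqrt{\lambda_{\min}(A^TA)},$$ assume $L_{\rm new}>0$, and set $\epsilon^*_{\rm new}:=\nu/(2L_{\rm new})$. Then for every $\epsilon$ with $0<\epsilon<\epsilon^*_{\rm new}$ and every $a\in\mathbb{R}^n$ with $\|a\|<2(\epsilon^*_{\rm new}-\epsilon)$, the set $$F_m(\epsilon,a)=\{f(x):~x\in\mathbb{R}^n,~\|x-a\|\le\epsilon\}$$ is a convex subset of $\mathbb{R}^m$.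
   Context: $\|\cdot\|$ on vectors is the Euclidean norm. $\lambda_{\max},\lambda_{\min}$ denote the largest and smallest eigenvalue of a symmetric matrix, and $\sigma_{\min}(A)$ denotes the smallest singular value of $A$, defined as $\sqrt{\lambda_{\min}(A^TA)}$. *)

theory Defs
  imports "HOL-Analysis.Analysis"
begin

text \<open>Real eigenvalues of a square matrix (for symmetric matrices these are all eigenvalues).\<close>
definition eigenvalues :: "real^'n^'n \<Rightarrow> real set" where
  "eigenvalues M = {l. \<exists>v. v \<noteq> 0 \<and> M *v v = l *\<^sub>R v}"

definition lambda_max :: "real^'n^'n \<Rightarrow> real" where
  "lambda_max M = Max (eigenvalues M)"

definition lambda_min :: "real^'n^'n \<Rightarrow> real" where
  "lambda_min M = Min (eigenvalues M)"

definition sigma_min :: "real^'m^'n \<Rightarrow> real" where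
  "sigma_min A = sqrt (lambda_min (transpose A ** A))"

definition symmetric_matrix :: "real^'n^'n \<Rightarrow> bool" where
  "symmetric_matrix M \<longleftrightarrow> transpose M = M"

end

theory Submission
  imports Defs
begin

text \<open>Let \<open>x\<^sub>1, x\<^sub>2\<close> lie in the ball, \<open>0 \<le> \<theta> \<le> 1\<close>, \<open>y = (1 - \<theta>) f x\<^sub>1 + \<theta> f x\<^sub>2\<close> and
  \<open>z = (1 - \<theta>) x\<^sub>1 + \<theta> x\<^sub>2\<close>. As \<open>f\<close> is quadratic with second-order part bounded by \<open>L\<close>,
  \<open>\<parallel>f z - y\<parallel> \<le> L c / 2\<close> for \<open>c = \<theta> (1 - \<theta>) \<parallel>x\<^sub>1 - x\<^sub>2\<parallel>\<^sup>2\<close>, while strict convexity of the ball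
  puts \<open>z\<close> at depth \<open>c / (2 \<epsilon>)\<close> inside it. Minimise \<open>\<parallel>f w - y\<parallel> + \<mu> \<parallel>w - z\<parallel>\<close> over the ball,
  where \<open>L \<epsilon> < \<mu> < \<nu> - L (\<parallel>a\<parallel> + \<epsilon>)\<close>; such \<open>\<mu>\<close> exists exactly because
  \<open>\<parallel>a\<parallel> < 2 (\<epsilon>\<^sup>* - \<epsilon>)\<close>. The first inequality keeps a minimiser \<open>x\<close> in the open ball. The
  second, with \<open>\<parallel>J(x)\<^sup>T r\<parallel> \<ge> (\<nu> - L \<parallel>x\<parallel>) \<parallel>r\<parallel>\<close>, makes \<open>-J(x)\<^sup>T (f x - y)\<close> a descent direction
  unless \<open>f x = y\<close>. Hence \<open>y\<close> is attained.\<close>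

lemma symmetric_matrix_inner_commute:
  fixes M :: "real^'n^'n"
  assumes "symmetric_matrix M"
  shows "x \<bullet> (M *v y) = y \<bullet> (M *v x)"
proof -
  have "x \<bullet> (M *v y) = (x v* M) \<bullet> y" by (simp add: dot_lmul_matrix)
  also have "x v* M = transpose M *v x" by simp
  also have "transpose M = M" using assms by (simp add: symmetric_matrix_def)
  finally show ?thesis by (simp add: inner_commute)
qed

lemma symmetric_matrix_uminus: "symmetric_matrix M \<Longrightarrow> symmetric_matrix (- M :: real^'n^'n)"
  by (simp add: symmetric_matrix_def transpose_def vec_eq_iff)

lemma matrix_vector_mult_uminus: "(- M) *v v = - (M *v (v :: real^'n))"
  by (simp add: matrix_vector_mult_def vec_eq_iff sum_negf)

lemma eigenvalues_uminus: "l \<in> eigenvalues (- M) \<Longrightarrow> - l \<in> eigenvalues M"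
  by (auto simp: eigenvalues_def matrix_vector_mult_uminus minus_equation_iff[of "M *v _"])

lemma symmetric_matrix_eigenvectors_orthogonal:
  fixes M :: "real^'n^'n"
  assumes "symmetric_matrix M" "M *v v = l *\<^sub>R v" "M *v u = k *\<^sub>R u" "l \<noteq> k"
  shows "v \<bullet> u = 0"
proof -
  have "l * (v \<bullet> u) = u \<bullet> (M *v v)" using assms(2) by (simp add: inner_commute)
  also have "\<dots> = v \<bullet> (M *v u)" using symmetric_matrix_inner_commute[OF assms(1)] by simp
  also have "\<dots> = k * (v \<bullet> u)" using assms(3) by simp
  finally show ?thesis using assms(4) by simp
qed

text \<open>Eigenvectors for distinct eigenvalues are orthogonal, hence independent, so there are at
  most \<open>CARD('n)\<close> eigenvalues.\<close>
lemma finite_eigenvalues: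
  fixes M :: "real^'n^'n"
  assumes sym: "symmetric_matrix M"
  shows "finite (eigenvalues M)"
proof -
  define V where "V l = (SOME v. v \<noteq> 0 \<and> M *v v = l *\<^sub>R v)" for l
  have V: "V l \<noteq> 0 \<and> M *v V l = l *\<^sub>R V l" if "l \<in> eigenvalues M" for l
  proof -
    from that have "\<exists>v. v \<noteq> 0 \<and> M *v v = l *\<^sub>R v" by (simp add: eigenvalues_def)
    then show ?thesis unfolding V_def by (rule someI_ex)
  qed
  have orth: "V l \<bullet> V k = 0" if "l \<in> eigenvalues M" "k \<in> eigenvalues M" "l \<noteq> k" for l k
    using symmetric_matrix_eigenvectors_orthogonal[OF sym conjunct2[OF V] conjunct2[OF V]] that by blast
  have inj: "inj_on V (eigenvalues M)"
    by (rule inj_onI) (metis V inner_eq_zero_iff orth)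
  have "pairwise orthogonal (V ` eigenvalues M)"
    unfolding pairwise_def orthogonal_def using orth by blast
  moreover have "0 \<notin> V ` eigenvalues M" using V by force
  ultimately have "independent (V ` eigenvalues M)" by (rule pairwise_orthogonal_independent)
  then have "finite (V ` eigenvalues M)" using independent_bound by blast
  then show ?thesis using inj finite_imageD by blast
qed

text \<open>First-order optimality: if \<open>l (y \<bullet> y) - y \<bullet> M y \<ge> 0\<close> vanishes at \<open>x\<close>, perturbing \<open>x\<close> along the
  residual \<open>w = M x - l x\<close> shows \<open>w = 0\<close>.\<close>
lemma rayleigh_maximizer_eigenvector:
  fixes M :: "real^'n^'n"
  assumes sym: "symmetric_matrix M"
    and le: "\<And>y. y \<bullet> (M *v y) \<le> l * (y \<bullet> y)"
    and eq: "x \<bullet> (M *v x) = l * (x \<bullet> x)"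
  shows "M *v x = l *\<^sub>R x"
proof (rule ccontr)
  assume "M *v x \<noteq> l *\<^sub>R x"
  define w where "w = M *v x - l *\<^sub>R x"
  define s where "s = w \<bullet> w"
  define q where "q = l * (w \<bullet> w) - w \<bullet> (M *v w)"
  have s0: "s > 0" using \<open>M *v x \<noteq> l *\<^sub>R x\<close> by (simp add: s_def w_def)
  have q0: "q \<ge> 0" using le[of w] by (simp add: q_def)
  have perturb: "2 * t * s \<le> t\<^sup>2 * q" for t :: real
  proof -
    have Mx: "M *v x = w + l *\<^sub>R x" by (simp add: w_def)
    have "x \<bullet> (M *v w) = w \<bullet> (M *v x)" by (rule symmetric_matrix_inner_commute[OF sym])
    then have "(x + t *\<^sub>R w) \<bullet> (M *v (x + t *\<^sub>R w)) =
        l * (x \<bullet> x) + 2 * t * (s + l * (w \<bullet> x)) + t\<^sup>2 * (w \<bullet> (M *v w))"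
      using eq Mx by (simp add: algebra_simps inner_add_left inner_add_right power2_eq_square s_def)
    moreover have "(x + t *\<^sub>R w) \<bullet> (x + t *\<^sub>R w) = x \<bullet> x + 2 * t * (w \<bullet> x) + t\<^sup>2 * (w \<bullet> w)"
      by (simp add: inner_add_left inner_add_right inner_commute[of x w] power2_eq_square algebra_simps)
    ultimately show ?thesis
      using le[of "x + t *\<^sub>R w"] by (simp add: q_def algebra_simps)
  qed
  define t where "t = s / (q + 1)"
  have "t > 0" using s0 q0 by (simp add: t_def)
  then have "2 * s \<le> t * q" using perturb[of t] by (simp add: power2_eq_square)
  moreover have "t * q < s" using s0 q0 by (simp add: t_def field_simps)
  ultimately show False using s0 by linarith
qed

lemma symmetric_matrix_max_eigenvalue:
  fixes M :: "real^'n^'n"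
  assumes sym: "symmetric_matrix M"
  obtains l where "l \<in> eigenvalues M" "\<And>y. y \<bullet> (M *v y) \<le> l * (y \<bullet> y)"
proof -
  have "axis undefined 1 \<in> sphere (0::real^'n) 1" by simp
  then have "sphere (0::real^'n) 1 \<noteq> {}" by blast
  moreover have "continuous_on (sphere 0 1) (\<lambda>y::real^'n. y \<bullet> (M *v y))"
    by (intro continuous_intros)
  ultimately have "\<exists>x\<in>sphere 0 1. \<forall>y\<in>sphere 0 1. y \<bullet> (M *v y) \<le> x \<bullet> (M *v x)"
    by (intro continuous_attains_sup compact_sphere)
  then obtain x where x: "x \<in> sphere 0 1"
    and max: "\<And>y. y \<in> sphere 0 1 \<Longrightarrow> y \<bullet> (M *v y) \<le> x \<bullet> (M *v x)"
    by blast
  define l where "l = x \<bullet> (M *v x)"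
  have xx: "x \<bullet> x = 1" using x by (simp add: norm_eq_1)
  have bound: "y \<bullet> (M *v y) \<le> l * (y \<bullet> y)" for y
  proof (cases "y = 0")
    case False
    define u where "u = (1 / norm y) *\<^sub>R y"
    have "u \<bullet> (M *v u) \<le> l" using False max[of u] by (simp add: u_def l_def)
    then have "(y \<bullet> y) * (u \<bullet> (M *v u)) \<le> (y \<bullet> y) * l" by (simp add: mult_left_mono)
    moreover have "(norm y *\<^sub>R u) \<bullet> (M *v (norm y *\<^sub>R u)) = (y \<bullet> y) * (u \<bullet> (M *v u))"
      by (simp add: matrix_vector_mult_scaleR dot_square_norm power2_eq_square)
    then have "y \<bullet> (M *v y) = (y \<bullet> y) * (u \<bullet> (M *v u))"
      using False by (simp add: u_def)
    ultimately show ?thesis by (simp add: mult.commute)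
  qed simp
  have "M *v x = l *\<^sub>R x" using rayleigh_maximizer_eigenvector[OF sym bound] xx by (simp add: l_def)
  moreover have "x \<noteq> 0" using xx by auto
  ultimately have "l \<in> eigenvalues M" by (auto simp: eigenvalues_def)
  then show ?thesis using that bound by blast
qed

lemma quadratic_form_le_lambda_max:
  fixes M :: "real^'n^'n"
  assumes sym: "symmetric_matrix M"
  shows "y \<bullet> (M *v y) \<le> lambda_max M * (y \<bullet> y)"
proof -
  obtain l where l: "l \<in> eigenvalues M" and bound: "\<And>y. y \<bullet> (M *v y) \<le> l * (y \<bullet> y)"
    using symmetric_matrix_max_eigenvalue[OF sym] by blast
  have "l \<le> lambda_max M" unfolding lambda_max_def using finite_eigenvalues[OF sym] l by simp
  then have "l * (y \<bullet> y) \<le> lambda_max M * (y \<bullet> y)" by (simp add: mult_right_mono)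
  then show ?thesis using bound[of y] by linarith
qed

lemma lambda_min_le_quadratic_form:
  fixes M :: "real^'n^'n"
  assumes sym: "symmetric_matrix M"
  shows "lambda_min M * (y \<bullet> y) \<le> y \<bullet> (M *v y)"
proof -
  obtain l where l: "l \<in> eigenvalues (- M)" and bound: "\<And>y. y \<bullet> (- M *v y) \<le> l * (y \<bullet> y)"
    using symmetric_matrix_max_eigenvalue[OF symmetric_matrix_uminus[OF sym]] by blast
  have "lambda_min M \<le> - l"
    unfolding lambda_min_def using finite_eigenvalues[OF sym] eigenvalues_uminus[OF l] by simp
  then have "lambda_min M * (y \<bullet> y) \<le> - l * (y \<bullet> y)" by (intro mult_right_mono) simp_all
  then show ?thesis using bound[of y] by (simp add: matrix_vector_mult_uminus)
qed

lemma matrix_vector_mult_sum_left: "sum T S *v y = (\<Sum>i\<in>S. T i *v (y :: real^'n))"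
  by (induction S rule: infinite_finite_induct) (simp_all add: matrix_vector_mult_add_rdistrib)

lemma transpose_sum: "transpose (sum T S) = (\<Sum>i\<in>S. transpose (T i :: real^'n^'m))"
  by (simp add: transpose_def vec_eq_iff)

lemma symmetric_matrix_transpose_mult_self: "symmetric_matrix (transpose B ** (B :: real^'n^'m))"
  by (simp add: symmetric_matrix_def matrix_transpose_mul)

lemma inner_transpose_mult_self:
  fixes B :: "real^'n^'m"
  shows "y \<bullet> ((transpose B ** B) *v y) = (norm (B *v y))\<^sup>2"
proof -
  have "(transpose B ** B) *v y = transpose B *v (B *v y)" by (simp add: matrix_vector_mul_assoc)
  also have "\<dots> = (B *v y) v* B" by simp
  finally have "y \<bullet> ((transpose B ** B) *v y) = ((B *v y) v* B) \<bullet> y"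
    by (simp add: inner_commute)
  also have "\<dots> = (norm (B *v y))\<^sup>2" by (simp add: dot_lmul_matrix power2_norm_eq_inner)
  finally show ?thesis .
qed

text \<open>If \<open>\<lambda>\<^sub>m\<^sub>i\<^sub>n(A\<^sup>T A)\<close> were negative, \<open>sigma_min A\<close> would be the negative junk value of \<open>sqrt\<close>,
  and the bound would hold trivially.\<close>
lemma sigma_min_le_norm: "sigma_min A * norm r \<le> norm (A *v r)"
proof (cases "sigma_min A \<le> 0")
  case False
  then have "(sigma_min A * norm r)\<^sup>2 = lambda_min (transpose A ** A) * (r \<bullet> r)"
    by (simp add: sigma_min_def power_mult_distrib dot_square_norm)
  also have "\<dots> \<le> (norm (A *v r))\<^sup>2"
    using lambda_min_le_quadratic_form[OF symmetric_matrix_transpose_mult_self]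
    by (simp add: inner_transpose_mult_self)
  finally show ?thesis by (rule power2_le_imp_le) simp
qed (simp add: order.trans[OF mult_nonpos_nonneg])

lemma sum_norm_mult_le_lambda_max:
  fixes As :: "'i::finite \<Rightarrow> real^'n^'k"
  shows "(\<Sum>i\<in>UNIV. (norm (As i *v v))\<^sup>2) \<le> lambda_max (\<Sum>i\<in>UNIV. transpose (As i) ** As i) * (norm v)\<^sup>2"
proof -
  have "symmetric_matrix (\<Sum>i\<in>UNIV. transpose (As i) ** As i)"
    unfolding symmetric_matrix_def transpose_sum by (simp add: matrix_transpose_mul)
  from quadratic_form_le_lambda_max[OF this, of v] show ?thesis
    by (simp add: matrix_vector_mult_sum_left inner_sum_right inner_transpose_mult_self dot_square_norm)
qed

definition quad_map :: "('m::finite \<Rightarrow> real^'n^'n) \<Rightarrow> ('m \<Rightarrow> real^'n) \<Rightarrow> real^'n \<Rightarrow> real^'m"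
  where "quad_map As as x = (\<chi> i. (1/2) * (x \<bullet> (As i *v x)) + as i \<bullet> x)"

definition quad_map_jacobian ::
    "('m::finite \<Rightarrow> real^'n^'n) \<Rightarrow> ('m \<Rightarrow> real^'n) \<Rightarrow> real^'n \<Rightarrow> real^'n \<Rightarrow> real^'m"
  where "quad_map_jacobian As as x h = (\<chi> i. (As i *v x + as i) \<bullet> h)"

definition quad_map_jacobian_adjoint ::
    "('m::finite \<Rightarrow> real^'n^'n) \<Rightarrow> ('m \<Rightarrow> real^'n) \<Rightarrow> real^'n \<Rightarrow> real^'m \<Rightarrow> real^'n"
  where "quad_map_jacobian_adjoint As as x r = (\<Sum>i\<in>UNIV. r $ i *\<^sub>R (As i *v x + as i))"

definition quad_forms :: "('m::finite \<Rightarrow> real^'n^'n) \<Rightarrow> real^'n \<Rightarrow> real^'m"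
  where "quad_forms As h = (\<chi> i. h \<bullet> (As i *v h))"

lemma quad_map_expansion:
  assumes "\<And>i. symmetric_matrix (As i)"
  shows "quad_map As as (x + h) =
    quad_map As as x + quad_map_jacobian As as x h + (1/2) *\<^sub>R quad_forms As h"
proof -
  have "x \<bullet> (As i *v h) = h \<bullet> (As i *v x)" for i
    using symmetric_matrix_inner_commute assms by blast
  then show ?thesis
    by (simp add: quad_map_def quad_map_jacobian_def quad_forms_def vec_eq_iff
      matrix_vector_right_distrib inner_add_left inner_add_right algebra_simps inner_commute[of h "As _ *v x"])
qed

lemma quad_map_jacobian_scaleR [simp]:
  "quad_map_jacobian As as x (c *\<^sub>R h) = c *\<^sub>R quad_map_jacobian As as x h"
  by (simp add: quad_map_jacobian_def vec_eq_iff)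

lemma quad_forms_scaleR [simp]: "quad_forms As (c *\<^sub>R h) = c\<^sup>2 *\<^sub>R quad_forms As h"
  by (simp add: quad_forms_def vec_eq_iff matrix_vector_mult_scaleR power2_eq_square)

lemma inner_quad_map_jacobian:
  "r \<bullet> quad_map_jacobian As as x h = quad_map_jacobian_adjoint As as x r \<bullet> h"
  by (simp add: quad_map_jacobian_def quad_map_jacobian_adjoint_def inner_vec_def[of r] inner_sum_left)

lemma continuous_on_quad_map: "continuous_on S (quad_map As as)"
  unfolding quad_map_def by (intro continuous_intros)

lemma norm_bilinear_forms_le:
  fixes As :: "'m::finite \<Rightarrow> real^'n^'n"
  assumes "0 \<le> L" and bound: "\<And>v. (\<Sum>i\<in>UNIV. (norm (As i *v v))\<^sup>2) \<le> (L * norm v)\<^sup>2"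
  shows "norm (\<chi> i. u \<bullet> (As i *v w)) \<le> L * norm u * norm w"
proof (rule power2_le_imp_le)
  have "(norm (\<chi> i. u \<bullet> (As i *v w)))\<^sup>2 = (\<Sum>i\<in>UNIV. (u \<bullet> (As i *v w))\<^sup>2)"
    unfolding power2_norm_eq_inner inner_vec_def by (simp add: power2_eq_square)
  also have "\<dots> \<le> (\<Sum>i\<in>UNIV. (norm u)\<^sup>2 * (norm (As i *v w))\<^sup>2)"
  proof (intro sum_mono)
    fix i
    have "\<bar>u \<bullet> (As i *v w)\<bar>\<^sup>2 \<le> (norm u * norm (As i *v w))\<^sup>2"
      using Cauchy_Schwarz_ineq2 by (intro power_mono) auto
    then show "(u \<bullet> (As i *v w))\<^sup>2 \<le> (norm u)\<^sup>2 * (norm (As i *v w))\<^sup>2"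
      by (simp add: power_mult_distrib)
  qed
  also have "\<dots> \<le> (norm u)\<^sup>2 * (L * norm w)\<^sup>2"
    by (simp add: sum_distrib_left[symmetric] mult_left_mono bound)
  finally show "(norm (\<chi> i. u \<bullet> (As i *v w)))\<^sup>2 \<le> (L * norm u * norm w)\<^sup>2"
    by (simp add: power_mult_distrib mult_ac)
qed (simp add: assms)

lemma norm_quad_forms_le:
  fixes As :: "'m::finite \<Rightarrow> real^'n^'n"
  assumes "0 \<le> L" "\<And>v. (\<Sum>i\<in>UNIV. (norm (As i *v v))\<^sup>2) \<le> (L * norm v)\<^sup>2"
  shows "norm (quad_forms As h) \<le> L * (norm h)\<^sup>2"
  using norm_bilinear_forms_le[OF assms, of h h] by (simp add: quad_forms_def power2_eq_square mult.assoc)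

text \<open>By symmetry, \<open>\<parallel>v\<parallel>\<^sup>2 = \<Sum>\<^sub>i r\<^sub>i x \<bullet> A\<^sub>i v\<close> for \<open>v = \<Sum>\<^sub>i r\<^sub>i A\<^sub>i x\<close>, which reduces the claim to
  \<open>norm_bilinear_forms_le\<close>.\<close>
lemma norm_sum_scaleR_mult_le:
  fixes As :: "'m::finite \<Rightarrow> real^'n^'n"
  assumes sym: "\<And>i. symmetric_matrix (As i)" and "0 \<le> L"
    and bound: "\<And>v. (\<Sum>i\<in>UNIV. (norm (As i *v v))\<^sup>2) \<le> (L * norm v)\<^sup>2"
  shows "norm (\<Sum>i\<in>UNIV. r $ i *\<^sub>R (As i *v x)) \<le> L * norm x * norm r"
proof -
  define v where "v = (\<Sum>i\<in>UNIV. r $ i *\<^sub>R (As i *v x))"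
  have "v \<bullet> v = (\<Sum>i\<in>UNIV. r $ i * ((As i *v x) \<bullet> v))"
    by (simp add: v_def inner_sum_left)
  also have "\<dots> = r \<bullet> (\<chi> i. x \<bullet> (As i *v v))"
    using symmetric_matrix_inner_commute[OF sym, where x=v and y=x]
    by (simp add: inner_vec_def[of r] inner_commute[of "As _ *v x" v])
  also have "\<dots> \<le> norm r * norm (\<chi> i. x \<bullet> (As i *v v))" by (rule norm_cauchy_schwarz)
  also have "\<dots> \<le> norm r * (L * norm x * norm v)"
    by (intro mult_left_mono norm_bilinear_forms_le[OF \<open>0 \<le> L\<close> bound]) simp
  finally have "norm v * norm v \<le> (L * norm x * norm r) * norm v"
    by (simp add: mult_ac flip: dot_square_norm power2_eq_square)
  then show ?thesis
    using \<open>0 \<le> L\<close> by (cases "norm v = 0") (simp_all add: v_def)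
qed

lemma norm_quad_map_jacobian_adjoint_ge:
  assumes "\<And>i. symmetric_matrix (As i)" "0 \<le> L"
    and "\<And>v. (\<Sum>i\<in>UNIV. (norm (As i *v v))\<^sup>2) \<le> (L * norm v)\<^sup>2"
    and "\<And>r. nu * norm r \<le> norm (\<Sum>i\<in>UNIV. r $ i *\<^sub>R as i)"
  shows "(nu - L * norm x) * norm r \<le> norm (quad_map_jacobian_adjoint As as x r)"
proof -
  have split: "quad_map_jacobian_adjoint As as x r =
      (\<Sum>i\<in>UNIV. r $ i *\<^sub>R as i) + (\<Sum>i\<in>UNIV. r $ i *\<^sub>R (As i *v x))"
    by (simp add: quad_map_jacobian_adjoint_def scaleR_add_right sum.distrib add.commute)
  have "norm (\<Sum>i\<in>UNIV. r $ i *\<^sub>R as i) - norm (\<Sum>i\<in>UNIV. r $ i *\<^sub>R (As i *v x))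
      \<le> norm (quad_map_jacobian_adjoint As as x r)"
    unfolding split by (rule norm_diff_ineq)
  then show ?thesis
    using norm_sum_scaleR_mult_le[OF assms(1-3), of r x] assms(4)[of r] by (simp add: algebra_simps)
qed

lemma quad_map_convex_combination:
  assumes "\<And>i. symmetric_matrix (As i)" "0 \<le> L"
    and "\<And>v. (\<Sum>i\<in>UNIV. (norm (As i *v v))\<^sup>2) \<le> (L * norm v)\<^sup>2"
    and "0 \<le> \<theta>" "\<theta> \<le> 1"
  shows "norm (quad_map As as ((1 - \<theta>) *\<^sub>R x1 + \<theta> *\<^sub>R x2)
      - ((1 - \<theta>) *\<^sub>R quad_map As as x1 + \<theta> *\<^sub>R quad_map As as x2))
    \<le> L * (\<theta> * (1 - \<theta>) * (norm (x1 - x2))\<^sup>2) / 2"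
proof -
  define z where "z = (1 - \<theta>) *\<^sub>R x1 + \<theta> *\<^sub>R x2"
  define d where "d = x1 - x2"
  define J where "J = quad_map_jacobian As as z d"
  define Q where "Q = quad_forms As d"
  have "x1 = z + \<theta> *\<^sub>R d" "x2 = z + (\<theta> - 1) *\<^sub>R d"
    by (simp_all add: z_def d_def algebra_simps)
  then have x1: "quad_map As as x1 = quad_map As as z + \<theta> *\<^sub>R J + (\<theta>\<^sup>2 / 2) *\<^sub>R Q"
    and x2: "quad_map As as x2 = quad_map As as z + (\<theta> - 1) *\<^sub>R J + ((\<theta> - 1)\<^sup>2 / 2) *\<^sub>R Q"
    by (simp_all add: quad_map_expansion[OF assms(1)] J_def Q_def)
  have gap: "(1 - \<theta>) *\<^sub>R quad_map As as x1 + \<theta> *\<^sub>R quad_map As as x2 - quad_map As as z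
      = (\<theta> * (1 - \<theta>) / 2) *\<^sub>R Q"
    unfolding x1 x2 by (simp add: vec_eq_iff power2_eq_square field_simps)
  have "norm (quad_map As as z - ((1 - \<theta>) *\<^sub>R quad_map As as x1 + \<theta> *\<^sub>R quad_map As as x2))
      = norm ((\<theta> * (1 - \<theta>) / 2) *\<^sub>R Q)"
    unfolding gap[symmetric] by (rule norm_minus_commute)
  also have "\<dots> = \<theta> * (1 - \<theta>) / 2 * norm Q"
    using assms(4,5) by simp
  also have "\<dots> \<le> \<theta> * (1 - \<theta>) / 2 * (L * (norm d)\<^sup>2)"
    using norm_quad_forms_le[OF assms(2,3)] assms(4,5) by (simp add: Q_def mult_left_mono)
  finally show ?thesis by (simp add: z_def d_def mult_ac)
qed

lemma norm_convex_combination_squared: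
  fixes p q :: "'a::real_inner"
  shows "(norm ((1 - \<theta>) *\<^sub>R p + \<theta> *\<^sub>R q))\<^sup>2
    = (1 - \<theta>) * (norm p)\<^sup>2 + \<theta> * (norm q)\<^sup>2 - \<theta> * (1 - \<theta>) * (norm (p - q))\<^sup>2"
  unfolding power2_norm_eq_inner
  by (simp add: inner_add_left inner_add_right inner_diff_left inner_diff_right inner_commute[of q p]
      power2_eq_square algebra_simps)

lemma le_tangent_of_square_le:
  fixes R u N :: real
  assumes "0 < R" "0 \<le> N" "N\<^sup>2 \<le> R\<^sup>2 - u"
  shows "N \<le> R - u / (2 * R)"
proof (rule power2_le_imp_le)
  have "u \<le> 2 * R\<^sup>2" using assms(3) by (smt (verit) zero_le_power2)
  then show "0 \<le> R - u / (2 * R)"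
    using assms(1) by (simp add: field_simps power2_eq_square)
  have "(R - u / (2 * R))\<^sup>2 = R\<^sup>2 - u + (u / (2 * R))\<^sup>2"
    using assms(1) by (simp add: power2_diff field_simps power2_eq_square)
  then show "N\<^sup>2 \<le> (R - u / (2 * R))\<^sup>2"
    using assms(3) by (smt (verit) zero_le_power2)
qed

lemma norm_diff_scaleR_le:
  fixes r v :: "'a::real_inner"
  assumes "r \<noteq> 0"
  shows "norm (r - t *\<^sub>R v) \<le> norm r - t * (r \<bullet> v) / norm r + t\<^sup>2 * (norm v)\<^sup>2 / (2 * norm r)"
proof -
  have "(norm (r - t *\<^sub>R v))\<^sup>2 = (norm r)\<^sup>2 - (2 * t * (r \<bullet> v) - t\<^sup>2 * (norm v)\<^sup>2)"
    unfolding power2_norm_eq_inner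
    by (simp add: inner_diff_left inner_diff_right inner_commute[of v r] power2_eq_square algebra_simps)
  then have "norm (r - t *\<^sub>R v) \<le> norm r - (2 * t * (r \<bullet> v) - t\<^sup>2 * (norm v)\<^sup>2) / (2 * norm r)"
    using assms by (intro le_tangent_of_square_le) simp_all
  also have "\<dots> = norm r - t * (r \<bullet> v) / norm r + t\<^sup>2 * (norm v)\<^sup>2 / (2 * norm r)"
    by (simp add: diff_divide_distrib)
  finally show ?thesis .
qed

lemma norm_convex_combination_le:
  fixes x1 x2 a :: "'a::real_inner"
  assumes "norm (x1 - a) \<le> eps" "norm (x2 - a) \<le> eps" "0 \<le> \<theta>" "\<theta> \<le> 1" "0 < eps"
  shows "norm ((1 - \<theta>) *\<^sub>R x1 + \<theta> *\<^sub>R x2 - a) \<le> eps - \<theta> * (1 - \<theta>) * (norm (x1 - x2))\<^sup>2 / (2 * eps)"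
proof (rule le_tangent_of_square_le)
  have "(1 - \<theta>) * (norm (x1 - a))\<^sup>2 + \<theta> * (norm (x2 - a))\<^sup>2 \<le> (1 - \<theta>) * eps\<^sup>2 + \<theta> * eps\<^sup>2"
    using assms by (intro add_mono mult_left_mono power_mono) simp_all
  moreover have "(1 - \<theta>) *\<^sub>R x1 + \<theta> *\<^sub>R x2 - a = (1 - \<theta>) *\<^sub>R (x1 - a) + \<theta> *\<^sub>R (x2 - a)"
    by (simp add: algebra_simps)
  ultimately show "(norm ((1 - \<theta>) *\<^sub>R x1 + \<theta> *\<^sub>R x2 - a))\<^sup>2
      \<le> eps\<^sup>2 - \<theta> * (1 - \<theta>) * (norm (x1 - x2))\<^sup>2"
    using norm_convex_combination_squared[of \<theta> "x1 - a" "x2 - a"] by (simp add: algebra_simps)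
qed (use assms in simp_all)

text \<open>One step of steepest descent for \<open>w \<mapsto> \<parallel>F w - y\<parallel> + \<mu> \<parallel>w - z\<parallel>\<close> at an interior point
  \<open>x\<close>: along \<open>-g\<close>, where \<open>g\<close> is the gradient \<open>J\<^sup>T (F x - y)\<close> of the residual, the first term
  decreases at rate \<open>\<parallel>g\<parallel>\<^sup>2 / \<parallel>F x - y\<parallel>\<close>, while the penalty grows at rate at most \<open>\<mu> \<parallel>g\<parallel>\<close>.\<close>
lemma penalized_residual_descent:
  fixes F :: "'a::real_inner \<Rightarrow> 'b::real_inner"
  assumes "norm (x - a) < eps"
    and expansion: "\<And>t. F (x - t *\<^sub>R g) = F x - t *\<^sub>R Jg + t\<^sup>2 *\<^sub>R Qg"
    and gradient: "(F x - y) \<bullet> Jg = g \<bullet> g"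
    and steep: "\<mu> * norm (F x - y) < norm g" and "0 \<le> \<mu>"
  obtains w where "norm (w - a) \<le> eps"
    "norm (F w - y) + \<mu> * norm (w - z) < norm (F x - y) + \<mu> * norm (x - z)"
proof -
  define r where "r = F x - y"
  define R where "R = norm r"
  define G where "G = norm g"
  define D where "D = (norm Jg)\<^sup>2 / (2 * R) + norm Qg"
  define rate where "rate = G\<^sup>2 / R - \<mu> * G"
  have "r \<noteq> 0" using steep gradient \<open>0 \<le> \<mu>\<close> by (auto simp: r_def)
  then have "R > 0" by (simp add: R_def)
  have "G > \<mu> * R" using steep by (simp add: G_def R_def r_def)
  then have "G > 0" using \<open>R > 0\<close> \<open>0 \<le> \<mu>\<close> by (smt (verit) mult_nonneg_nonneg)
  have "rate = G * (G - \<mu> * R) / R" using \<open>R > 0\<close> by (simp add: rate_def field_simps power2_eq_square)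
  then have "rate > 0" using \<open>G > \<mu> * R\<close> \<open>G > 0\<close> \<open>R > 0\<close> by simp
  have D: "D \<ge> 0" using \<open>R > 0\<close> by (simp add: D_def)
  have decrease: "norm (F (x - t *\<^sub>R g) - y) + \<mu> * norm (x - t *\<^sub>R g - z)
      \<le> R + \<mu> * norm (x - z) - t * (rate - t * D)" if "t \<ge> 0" for t
  proof -
    have "F (x - t *\<^sub>R g) - y = (r - t *\<^sub>R Jg) + t\<^sup>2 *\<^sub>R Qg"
      by (simp add: expansion r_def algebra_simps)
    then have "norm (F (x - t *\<^sub>R g) - y) \<le> norm (r - t *\<^sub>R Jg) + norm (t\<^sup>2 *\<^sub>R Qg)"
      by (metis norm_triangle_ineq)
    also have "\<dots> \<le> R - t * G\<^sup>2 / R + t\<^sup>2 * (norm Jg)\<^sup>2 / (2 * R) + t\<^sup>2 * norm Qg"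
      using norm_diff_scaleR_le[OF \<open>r \<noteq> 0\<close>, of t Jg] gradient
      by (simp add: R_def G_def r_def power2_norm_eq_inner)
    finally have "norm (F (x - t *\<^sub>R g) - y) \<le> R - t * G\<^sup>2 / R + t\<^sup>2 * D"
      by (simp add: D_def algebra_simps)
    moreover have "\<mu> * norm (x - t *\<^sub>R g - z) \<le> \<mu> * (norm (x - z) + t * G)"
      using norm_triangle_ineq4[of "x - z" "t *\<^sub>R g"] that \<open>0 \<le> \<mu>\<close>
      by (intro mult_left_mono) (simp_all add: G_def algebra_simps)
    ultimately show ?thesis
      by (simp add: rate_def algebra_simps power2_eq_square)
  qed
  define t where "t = min ((eps - norm (x - a)) / G) (rate / (D + 1))"
  have "t > 0" using assms(1) \<open>G > 0\<close> \<open>rate > 0\<close> D by (simp add: t_def)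
  have "t * G \<le> eps - norm (x - a)"
    using \<open>G > 0\<close> by (simp add: t_def min_le_iff_disj pos_le_divide_eq[symmetric])
  have "t * D < rate"
  proof -
    have "t * D \<le> rate / (D + 1) * D" using D by (intro mult_right_mono) (simp_all add: t_def)
    also have "\<dots> < rate" using D \<open>rate > 0\<close> by (simp add: field_simps)
    finally show ?thesis .
  qed
  show ?thesis
  proof
    show "norm (x - t *\<^sub>R g - a) \<le> eps"
      using norm_triangle_ineq4[of "x - a" "t *\<^sub>R g"] \<open>t > 0\<close> \<open>t * G \<le> eps - norm (x - a)\<close>
      by (simp add: G_def algebra_simps)
    show "norm (F (x - t *\<^sub>R g) - y) + \<mu> * norm (x - t *\<^sub>R g - z) < norm (F x - y) + \<mu> * norm (x - z)"
      using decrease[of t] \<open>t > 0\<close> mult_pos_pos[OF \<open>t > 0\<close>, of "rate - t * D"] \<open>t * D < rate\<close>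
      unfolding R_def r_def by linarith
  qed
qed

lemma quad_map_image_cball_memI:
  fixes As :: "'m::finite \<Rightarrow> real^'n^'n"
  assumes sym: "\<And>i. symmetric_matrix (As i)" and "0 \<le> L"
    and bound: "\<And>v. (\<Sum>i\<in>UNIV. (norm (As i *v v))\<^sup>2) \<le> (L * norm v)\<^sup>2"
    and lower: "\<And>r. nu * norm r \<le> norm (\<Sum>i\<in>UNIV. r $ i *\<^sub>R as i)"
    and "0 < eps" and small: "L * (norm a + 2 * eps) < nu"
    and near: "norm (quad_map As as z - y) \<le> L * c / 2"
    and deep: "norm (z - a) \<le> eps - c / (2 * eps)" and "0 \<le> c"
  shows "y \<in> quad_map As as ` cball a eps"
proof (cases "c = 0")
  case True
  then show ?thesis using near deep by (auto simp: dist_norm norm_minus_commute)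
next
  case False
  let ?f = "quad_map As as"
  define \<mu> where "\<mu> = (nu - L * norm a) / 2"
  have "L * eps < \<mu>" "\<mu> < nu - L * (norm a + eps)" using small by (simp_all add: \<mu>_def field_simps)
  define \<psi> where "\<psi> w = norm (?f w - y) + \<mu> * norm (w - z)" for w
  have "continuous_on (cball a eps) \<psi>"
    unfolding \<psi>_def by (intro continuous_intros continuous_on_quad_map)
  then obtain x where x: "x \<in> cball a eps" and min: "\<And>w. w \<in> cball a eps \<Longrightarrow> \<psi> x \<le> \<psi> w"
    using continuous_attains_inf[of "cball a eps" \<psi>] \<open>0 < eps\<close> by auto
  have "z \<in> cball a eps"
    using deep \<open>0 \<le> c\<close> \<open>0 < eps\<close> by (simp add: dist_norm norm_minus_commute) (smt (verit) divide_nonneg_pos)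
  have "\<mu> * norm (x - z) \<le> \<psi> x" by (simp add: \<psi>_def)
  also have "\<dots> \<le> \<psi> z" using min \<open>z \<in> cball a eps\<close> .
  also have "\<dots> \<le> L * eps * (c / (2 * eps))" using near \<open>0 < eps\<close> by (simp add: \<psi>_def)
  also have "\<dots> < \<mu> * (c / (2 * eps))"
    using \<open>L * eps < \<mu>\<close> \<open>0 \<le> c\<close> \<open>c \<noteq> 0\<close> \<open>0 < eps\<close> by (intro mult_strict_right_mono) simp_all
  finally have "norm (x - z) < c / (2 * eps)"
    using \<open>L * eps < \<mu>\<close> \<open>0 \<le> L\<close> \<open>0 < eps\<close> by (smt (verit) mult_le_cancel_left mult_nonneg_nonneg)
  then have "norm (x - a) < eps"
    using deep norm_triangle_ineq[of "x - z" "z - a"] by simp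
  show ?thesis
  proof (rule ccontr)
    assume "y \<notin> ?f ` cball a eps"
    then have "?f x \<noteq> y" using x by blast
    define g where "g = quad_map_jacobian_adjoint As as x (?f x - y)"
    have "norm x \<le> norm a + eps" using norm_triangle_ineq2[of x a] \<open>norm (x - a) < eps\<close> by simp
    then have "\<mu> * norm (?f x - y) < (nu - L * norm x) * norm (?f x - y)"
      using \<open>\<mu> < nu - L * (norm a + eps)\<close> \<open>?f x \<noteq> y\<close> \<open>0 \<le> L\<close>
      by (intro mult_strict_right_mono) (simp_all add: mult_left_mono order.strict_trans2)
    also have "\<dots> \<le> norm g"
      unfolding g_def by (rule norm_quad_map_jacobian_adjoint_ge[OF sym \<open>0 \<le> L\<close> bound lower])
    finally have steep: "\<mu> * norm (?f x - y) < norm g" .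
    have expansion: "?f (x - t *\<^sub>R g) =
        ?f x - t *\<^sub>R quad_map_jacobian As as x g + t\<^sup>2 *\<^sub>R ((1/2) *\<^sub>R quad_forms As g)" for t
    proof -
      have "?f (x + (- t) *\<^sub>R g) = ?f x + (- t) *\<^sub>R quad_map_jacobian As as x g
          + (1/2) *\<^sub>R ((- t)\<^sup>2 *\<^sub>R quad_forms As g)"
        by (simp only: quad_map_expansion[of As, OF sym] quad_map_jacobian_scaleR quad_forms_scaleR)
      then show ?thesis by simp
    qed
    have gradient: "(?f x - y) \<bullet> quad_map_jacobian As as x g = g \<bullet> g"
      by (simp add: inner_quad_map_jacobian g_def)
    have "0 \<le> \<mu>" using \<open>L * eps < \<mu>\<close> \<open>0 \<le> L\<close> \<open>0 < eps\<close> by (smt (verit) mult_nonneg_nonneg)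
    obtain w where "norm (w - a) \<le> eps" "\<psi> w < \<psi> x"
      using penalized_residual_descent[OF \<open>norm (x - a) < eps\<close> expansion gradient steep \<open>0 \<le> \<mu>\<close>]
      unfolding \<psi>_def by blast
    then show False using min[of w] by (simp add: dist_norm norm_minus_commute)
  qed
qed

lemma convex_quad_map_image_cball:
  fixes As :: "'m::finite \<Rightarrow> real^'n^'n"
  assumes sym: "\<And>i. symmetric_matrix (As i)" and "0 \<le> L"
    and bound: "\<And>v. (\<Sum>i\<in>UNIV. (norm (As i *v v))\<^sup>2) \<le> (L * norm v)\<^sup>2"
    and lower: "\<And>r. nu * norm r \<le> norm (\<Sum>i\<in>UNIV. r $ i *\<^sub>R as i)"
    and "0 < eps" and small: "L * (norm a + 2 * eps) < nu"
  shows "convex (quad_map As as ` cball a eps)"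
  unfolding convex_alt
proof (intro ballI allI impI)
  fix p q and \<theta> :: real
  assume "p \<in> quad_map As as ` cball a eps" "q \<in> quad_map As as ` cball a eps" "0 \<le> \<theta> \<and> \<theta> \<le> 1"
  moreover obtain x1 x2 where "x1 \<in> cball a eps" "x2 \<in> cball a eps"
    and "p = quad_map As as x1" "q = quad_map As as x2"
    using calculation by blast
  ultimately show "(1 - \<theta>) *\<^sub>R p + \<theta> *\<^sub>R q \<in> quad_map As as ` cball a eps"
    using quad_map_convex_combination[OF sym \<open>0 \<le> L\<close> bound, of \<theta> as x1 x2]
      norm_convex_combination_le[of x1 a eps x2 \<theta>] \<open>0 < eps\<close>
    unfolding mem_cball dist_norm norm_minus_commute[of a]
    by (intro quad_map_image_cball_memI[OF sym \<open>0 \<le> L\<close> bound lower \<open>0 < eps\<close> small,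
          where z = "(1 - \<theta>) *\<^sub>R x1 + \<theta> *\<^sub>R x2" and c = "\<theta> * (1 - \<theta>) * (norm (x1 - x2))\<^sup>2"])
      simp_all
qed

theorem theorem3:
  fixes As :: "'m::finite \<Rightarrow> real^'n^'n"
    and as :: "'m \<Rightarrow> real^'n::finite"
    and f :: "real^'n \<Rightarrow> real^'m"
    and A :: "real^'m^'n"
    and L_new nu eps_star eps :: real
    and a :: "real^'n"
  assumes sym: "\<And>i. symmetric_matrix (As i)"
    and f_def: "\<And>x. f x = (\<chi> i. (1/2) * (x \<bullet> (As i *v x)) + as i \<bullet> x)"
    and A_def: "A = (\<chi> r c. as c $ r)"
    and L_def: "L_new = sqrt (lambda_max (\<Sum>i\<in>UNIV. transpose (As i) ** As i))"
    and nu_def: "nu = sigma_min A"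
    and L_pos: "L_new > 0"
    and eps_star_def: "eps_star = nu / (2 * L_new)"
    and eps_pos: "0 < eps" and eps_lt: "eps < eps_star"
    and a_small: "norm a < 2 * (eps_star - eps)"
  shows "convex (f ` {x. norm (x - a) \<le> eps})"
proof -
  have f: "f = quad_map As as" using f_def by (auto simp: quad_map_def)
  have ball: "{x. norm (x - a) \<le> eps} = cball a eps" by (auto simp: dist_norm norm_minus_commute)
  have bound: "(\<Sum>i\<in>UNIV. (norm (As i *v v))\<^sup>2) \<le> (L_new * norm v)\<^sup>2" for v
    using sum_norm_mult_le_lambda_max[of As v] L_pos by (simp add: L_def power_mult_distrib)
  have "A *v r = (\<Sum>i\<in>UNIV. r $ i *\<^sub>R as i)" for r
    by (simp add: A_def matrix_vector_mult_def vec_eq_iff mult.commute)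
  then have lower: "nu * norm r \<le> norm (\<Sum>i\<in>UNIV. r $ i *\<^sub>R as i)" for r
    using sigma_min_le_norm[of A r] by (simp add: nu_def)
  have small: "L_new * (norm a + 2 * eps) < nu"
    using a_small L_pos by (simp add: eps_star_def field_simps)
  show ?thesis
    unfolding f ball
    by (rule convex_quad_map_image_cball[of As, OF sym _ bound lower eps_pos small]) (use L_pos in simp)
qed

end
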